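(* Let $n\ge 2$, let $\Omega$ be a compact subset of $\mathbb{R}^n$, and for $\delta>0$ let $\Omega_\delta=\{x+\delta u : x\in\Omega,\ u\in B^n\}=\bigcup_{x\in\Omega}B_\delta(x)$. Then $\mathit{Uf}(\Omega_\delta)\subset \mathit{Uf}(\Omega)$ for every $\delta>0$. Moreover, if $\Omega$ is convex, then $\mathit{Uf}(\Omega_\delta)=\mathit{Uf}(\Omega)$ for every $\delta>0$.
   Context: $B^n$ is the closed unit ball in $\mathbb{R}^n$ and $B_\delta(x)$ the closed ball with center $x$ and radius $\delta$; $S^{n-1}$ is the unit sphere. For $X\subset\mathbb{R}^n$, $v\in S^{n-1}$ and $b\in\mathbb{R}$, put $X^+_{v,b}=X\cap\{x\in\mathbb{R}^n : x\cdot v>b\}$, and let $\mathrm{R}_{v,b}$ be the reflection of $\mathbb{R}^n$ in the hyperplane $\{x : x\cdot v=b\}$. For a bounded $X\subset\mathbb{R}^n$, define $l_X(v)=\inf\{a : \mathrm{R}_{v,c}(X^+_{v,c})\subset X \text{ for every } c\ge a\}$ and the minimal unfolded region $\mathit{Uf}(X)=\bigcap_{v\in S^{n-1}}\{x\in\mathbb{R}^n : x\cdot v\le l_X(v)\}$. *)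

theory Defs
  imports "HOL-Analysis.Analysis"
begin

definition upper_part :: "'a::euclidean_space set \<Rightarrow> 'a \<Rightarrow> real \<Rightarrow> 'a set" where
  "upper_part X v b = X \<inter> {x. x \<bullet> v > b}"

definition refl_hyp :: "'a::euclidean_space \<Rightarrow> real \<Rightarrow> 'a \<Rightarrow> 'a" where
  "refl_hyp v b x = x - (2 * (x \<bullet> v - b)) *\<^sub>R v"

definition l_fun :: "'a::euclidean_space set \<Rightarrow> 'a \<Rightarrow> real" where
  "l_fun X v = Inf {a. \<forall>c\<ge>a. refl_hyp v c ` upper_part X v c \<subseteq> X}"

definition Uf :: "'a::euclidean_space set \<Rightarrow> 'a set" where
  "Uf X = (\<Inter>v\<in>sphere 0 1. {x. x \<bullet> v \<le> l_fun X v})"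

definition thicken :: "'a::euclidean_space set \<Rightarrow> real \<Rightarrow> 'a set" where
  "thicken \<Omega> \<delta> = {x + \<delta> *\<^sub>R u | x u. x \<in> \<Omega> \<and> u \<in> cball 0 1}"

end

theory Submission
  imports Defs
begin

text \<open>
  Reflecting a configuration of balls of radius \<delta> moves every ball onto another ball of radius
  \<delta>, and a point of \<open>\<Omega>\<close> on the near side of the hyperplane is at least as close to the reflected
  point as to the original one. Hence every hyperplane that reflects the cap of \<open>\<Omega>\<close> into \<open>\<Omega>\<close>
  also reflects the cap of \<open>\<Omega>\<^sub>\<delta>\<close> into \<open>\<Omega>\<^sub>\<delta>\<close>, so \<open>l\<^bsub>\<Omega>\<^sub>\<delta>\<^esub> \<le> l\<^bsub>\<Omega>\<^esub>\<close>.
  For convex \<open>\<Omega>\<close> the converse holds: if a reflected point \<open>z\<close> of the cap of \<open>\<Omega>\<close> left \<open>\<Omega>\<close>,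
  push \<open>z\<close> a distance \<delta> further along the normal of a hyperplane separating it from \<open>\<Omega>\<close>;
  the result is outside \<open>\<Omega>\<^sub>\<delta>\<close>, yet it is the reflection of a point of the cap of \<open>\<Omega>\<^sub>\<delta>\<close>.
\<close>

definition admissible_levels :: "'a::euclidean_space set \<Rightarrow> 'a \<Rightarrow> real set" where
  "admissible_levels X v = {a. \<forall>c\<ge>a. refl_hyp v c ` upper_part X v c \<subseteq> X}"

lemma l_fun_eq_Inf_admissible_levels: "l_fun X v = Inf (admissible_levels X v)"
  by (simp add: l_fun_def admissible_levels_def)

lemma inner_refl_hyp:
  fixes v :: "'a::euclidean_space"
  assumes "norm v = 1"
  shows "refl_hyp v c x \<bullet> v = 2 * c - x \<bullet> v"
  using assms by (simp add: refl_hyp_def inner_diff_left norm_eq_1 algebra_simps)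

lemma refl_hyp_refl_hyp:
  fixes v :: "'a::euclidean_space"
  assumes "norm v = 1"
  shows "refl_hyp v c (refl_hyp v c x) = x"
proof -
  have "refl_hyp v c (refl_hyp v c x) = refl_hyp v c x - (2 * (c - x \<bullet> v)) *\<^sub>R v"
    unfolding refl_hyp_def[of v c "refl_hyp v c x"] inner_refl_hyp[OF assms] by simp
  also have "\<dots> = x"
    by (simp add: refl_hyp_def algebra_simps)
  finally show ?thesis .
qed

lemma dist_refl_hyp:
  fixes v :: "'a::euclidean_space"
  assumes "norm v = 1"
  shows "dist (refl_hyp v c x) (refl_hyp v c y) = dist x y"
proof -
  have "(dist (refl_hyp v c x) (refl_hyp v c y))\<^sup>2 = (dist x y)\<^sup>2"
    using assms
    by (simp add: dist_norm refl_hyp_def power2_norm_eq_inner inner_diff_left inner_diff_right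
        norm_eq_1 algebra_simps inner_commute)
  then show ?thesis
    by (simp add: power2_eq_iff_nonneg)
qed

lemma dist_refl_hyp_le:
  fixes v :: "'a::euclidean_space"
  assumes "norm v = 1" and "x \<bullet> v \<le> c" and "c \<le> y \<bullet> v"
  shows "dist x (refl_hyp v c y) \<le> dist x y"
proof -
  have "(dist x (refl_hyp v c y))\<^sup>2 = (dist x y)\<^sup>2 - 4 * (y \<bullet> v - c) * (c - x \<bullet> v)"
    using assms(1)
    by (simp add: dist_norm refl_hyp_def power2_norm_eq_inner inner_diff_left inner_diff_right
        norm_eq_1 algebra_simps inner_commute)
  also have "\<dots> \<le> (dist x y)\<^sup>2"
    using assms(2,3) by simp
  finally show ?thesis
    by (simp add: power2_le_iff_abs_le)
qed

lemma thicken_eq_UN_cball: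
  fixes \<Omega> :: "'a::euclidean_space set"
  assumes "\<delta> > 0"
  shows "thicken \<Omega> \<delta> = (\<Union>x\<in>\<Omega>. cball x \<delta>)"
proof (intro set_eqI iffI)
  fix z assume "z \<in> thicken \<Omega> \<delta>"
  then obtain x u where "x \<in> \<Omega>" "norm u \<le> 1" "z = x + \<delta> *\<^sub>R u"
    by (auto simp: thicken_def)
  with assms show "z \<in> (\<Union>x\<in>\<Omega>. cball x \<delta>)"
    by (auto simp: dist_norm intro!: bexI[of _ x] mult_left_le)
next
  fix z assume "z \<in> (\<Union>x\<in>\<Omega>. cball x \<delta>)"
  then obtain x where x: "x \<in> \<Omega>" "dist x z \<le> \<delta>"
    by auto
  define u where "u = (1 / \<delta>) *\<^sub>R (z - x)"
  have "z = x + \<delta> *\<^sub>R u"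
    using assms by (simp add: u_def)
  moreover have "u \<in> cball 0 1"
    using assms x(2) by (simp add: u_def dist_norm norm_minus_commute divide_le_eq_1)
  ultimately show "z \<in> thicken \<Omega> \<delta>"
    using x(1) unfolding thicken_def by blast
qed

lemma compact_thicken:
  fixes \<Omega> :: "'a::euclidean_space set"
  assumes "compact \<Omega>"
  shows "compact (thicken \<Omega> \<delta>)"
proof -
  have "thicken \<Omega> \<delta> = {x + y | x y. x \<in> \<Omega> \<and> y \<in> (\<lambda>u. \<delta> *\<^sub>R u) ` cball 0 1}"
    unfolding thicken_def by blast
  then show ?thesis
    by (simp add: compact_sums compact_scaling assms)
qed

lemma refl_hyp_cap_thicken:
  fixes \<Omega> :: "'a::euclidean_space set"
  assumes v: "norm v = 1" and "\<delta> > 0"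
    and refl: "refl_hyp v c ` upper_part \<Omega> v c \<subseteq> \<Omega>"
  shows "refl_hyp v c ` upper_part (thicken \<Omega> \<delta>) v c \<subseteq> thicken \<Omega> \<delta>"
proof
  fix z assume "z \<in> refl_hyp v c ` upper_part (thicken \<Omega> \<delta>) v c"
  then obtain x y where x: "x \<in> \<Omega>" and xy: "dist x y \<le> \<delta>" and y: "y \<bullet> v > c"
    and z: "z = refl_hyp v c y"
    by (auto simp: upper_part_def thicken_eq_UN_cball[OF \<open>\<delta> > 0\<close>])
  show "z \<in> thicken \<Omega> \<delta>"
  proof (cases "x \<bullet> v > c")
    case True
    then have "refl_hyp v c x \<in> \<Omega>"
      using refl x by (auto simp: upper_part_def)
    moreover have "dist (refl_hyp v c x) z \<le> \<delta>"
      using xy by (simp add: z dist_refl_hyp[OF v])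
    ultimately show ?thesis
      by (auto simp: thicken_eq_UN_cball[OF \<open>\<delta> > 0\<close>])
  next
    case False
    then have "dist x z \<le> \<delta>"
      using dist_refl_hyp_le[OF v, of x c y] xy y z by simp
    with x show ?thesis
      by (auto simp: thicken_eq_UN_cball[OF \<open>\<delta> > 0\<close>])
  qed
qed

lemma refl_hyp_cap_of_thicken:
  fixes \<Omega> :: "'a::euclidean_space set"
  assumes v: "norm v = 1" and "\<delta> > 0" and "convex \<Omega>" "closed \<Omega>"
    and refl: "refl_hyp v c ` upper_part (thicken \<Omega> \<delta>) v c \<subseteq> thicken \<Omega> \<delta>"
  shows "refl_hyp v c ` upper_part \<Omega> v c \<subseteq> \<Omega>"
proof
  fix z assume "z \<in> refl_hyp v c ` upper_part \<Omega> v c"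
  then obtain x where x: "x \<in> \<Omega>" "x \<bullet> v > c" and z: "z = refl_hyp v c x"
    by (auto simp: upper_part_def)
  show "z \<in> \<Omega>"
  proof (rule ccontr)
    assume "z \<notin> \<Omega>"
    then obtain a b where ab: "a \<bullet> z < b" "\<forall>y\<in>\<Omega>. a \<bullet> y > b"
      using separating_hyperplane_closed_point[OF \<open>convex \<Omega>\<close> \<open>closed \<Omega>\<close>] by blast
    then have "a \<noteq> 0"
      using x by auto
    define w where "w = - (1 / norm a) *\<^sub>R a"
    have w: "norm w = 1"
      using \<open>a \<noteq> 0\<close> by (simp add: w_def)
    have separating: "w \<bullet> y < w \<bullet> z" if "y \<in> \<Omega>" for y
    proof -
      have "a \<bullet> z < a \<bullet> y"
        using ab that by force
      with \<open>a \<noteq> 0\<close> show ?thesis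
        by (simp add: w_def divide_simps)
    qed
    have "w \<bullet> z - w \<bullet> x = - 2 * (x \<bullet> v - c) * (w \<bullet> v)"
      by (simp add: z refl_hyp_def inner_diff_right algebra_simps)
    with separating[OF x(1)] have "(x \<bullet> v - c) * (w \<bullet> v) < 0"
      by linarith
    with x(2) have "w \<bullet> v < 0"
      by (simp add: mult_less_0_iff)
    define q where "q = z + \<delta> *\<^sub>R w"
    have "q \<notin> thicken \<Omega> \<delta>"
    proof
      assume "q \<in> thicken \<Omega> \<delta>"
      then obtain y where y: "y \<in> \<Omega>" "dist y q \<le> \<delta>"
        by (auto simp: thicken_eq_UN_cball[OF \<open>\<delta> > 0\<close>])
      have "w \<bullet> (q - y) \<le> dist y q"
        using norm_cauchy_schwarz[of w "q - y"] w by (simp add: dist_norm norm_minus_commute)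
      moreover have "w \<bullet> (q - y) = w \<bullet> z + \<delta> - w \<bullet> y"
        using w by (simp add: q_def inner_diff_right inner_add_right norm_eq_1)
      ultimately show False
        using separating[OF y(1)] y(2) by linarith
    qed
    moreover have "refl_hyp v c q \<in> thicken \<Omega> \<delta>"
    proof -
      have "dist x (refl_hyp v c q) = dist z q"
        using dist_refl_hyp[OF v, of c z q] by (simp add: z refl_hyp_refl_hyp[OF v])
      also have "\<dots> = \<delta>"
        using w \<open>\<delta> > 0\<close> by (simp add: q_def dist_norm)
      finally show ?thesis
        using x(1) by (auto simp: thicken_eq_UN_cball[OF \<open>\<delta> > 0\<close>])
    qed
    moreover have "refl_hyp v c q \<bullet> v > c"
    proof -
      have "\<delta> * (w \<bullet> v) < 0"
        using \<open>\<delta> > 0\<close> \<open>w \<bullet> v < 0\<close> by (rule mult_pos_neg)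
      then show ?thesis
        using x(2) by (simp add: q_def z inner_add_left inner_refl_hyp[OF v])
    qed
    ultimately show False
      using refl refl_hyp_refl_hyp[OF v, of c q] by (force simp: upper_part_def)
  qed
qed

lemma admissible_levels_thicken_subset:
  assumes "norm v = 1" and "\<delta> > 0"
  shows "admissible_levels \<Omega> v \<subseteq> admissible_levels (thicken \<Omega> \<delta>) v"
proof
  fix a assume "a \<in> admissible_levels \<Omega> v"
  then show "a \<in> admissible_levels (thicken \<Omega> \<delta>) v"
    using refl_hyp_cap_thicken[OF assms] by (simp add: admissible_levels_def)
qed

lemma admissible_levels_thicken_eq:
  assumes "norm v = 1" and "\<delta> > 0" and "convex \<Omega>" "closed \<Omega>"
  shows "admissible_levels (thicken \<Omega> \<delta>) v = admissible_levels \<Omega> v"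
proof (intro subset_antisym subsetI)
  fix a assume "a \<in> admissible_levels (thicken \<Omega> \<delta>) v"
  then show "a \<in> admissible_levels \<Omega> v"
    using refl_hyp_cap_of_thicken[OF assms] by (simp add: admissible_levels_def)
qed (use admissible_levels_thicken_subset[OF assms(1,2)] in blast)

lemma admissible_levels_nonempty:
  fixes X :: "'a::euclidean_space set"
  assumes "bounded X" and "norm v = 1"
  shows "admissible_levels X v \<noteq> {}"
proof -
  obtain r where r: "\<forall>x\<in>X. norm x \<le> r"
    using assms(1) bounded_iff by blast
  have "x \<bullet> v \<le> r" if "x \<in> X" for x
    using norm_cauchy_schwarz[of x v] assms(2) r that by fastforce
  then have "upper_part X v c = {}" if "c \<ge> r" for c
    using that by (force simp: upper_part_def)
  then have "r \<in> admissible_levels X v"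
    by (simp add: admissible_levels_def)
  then show ?thesis
    by blast
qed

lemma bdd_below_admissible_levels:
  fixes X :: "'a::euclidean_space set"
  assumes "bounded X" and "X \<noteq> {}" and v: "norm v = 1"
  shows "bdd_below (admissible_levels X v)"
proof -
  obtain r where r: "\<forall>x\<in>X. norm x \<le> r"
    using assms(1) bounded_iff by blast
  have abs_le: "\<bar>x \<bullet> v\<bar> \<le> r" if "x \<in> X" for x
    using Cauchy_Schwarz_ineq2[of x v] v r that by fastforce
  obtain x0 where x0: "x0 \<in> X"
    using assms(2) by blast
  have "- r \<le> a" if "a \<in> admissible_levels X v" for a
  proof (rule ccontr)
    assume "\<not> - r \<le> a"
    then have "x0 \<bullet> v > a"
      using abs_le[OF x0] by linarith
    then have "refl_hyp v a x0 \<in> X"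
      using that x0 by (auto simp: admissible_levels_def upper_part_def)
    then show False
      using abs_le[OF x0] abs_le[of "refl_hyp v a x0"] inner_refl_hyp[OF v] \<open>\<not> - r \<le> a\<close>
      by force
  qed
  then show ?thesis
    by (rule bdd_belowI)
qed

lemma Uf_antimono_levels:
  fixes X Y :: "'a::euclidean_space set"
  assumes "bounded X" "bounded Y" "Y \<noteq> {}"
    and levels: "\<And>v. norm v = 1 \<Longrightarrow> admissible_levels X v \<subseteq> admissible_levels Y v"
  shows "Uf Y \<subseteq> Uf X"
proof -
  have "l_fun Y v \<le> l_fun X v" if "norm v = 1" for v
    unfolding l_fun_eq_Inf_admissible_levels
  proof (rule cInf_superset_mono)
    show "admissible_levels X v \<noteq> {}"
      using assms(1) that by (rule admissible_levels_nonempty)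
    show "bdd_below (admissible_levels Y v)"
      using assms(2,3) that by (rule bdd_below_admissible_levels)
    show "admissible_levels X v \<subseteq> admissible_levels Y v"
      using that by (rule levels)
  qed
  then show ?thesis
    by (force simp: Uf_def)
qed

theorem theorem3p1:
  fixes \<Omega> :: "'a::euclidean_space set"
  assumes "DIM('a) \<ge> 2" and "compact \<Omega>"
  shows "(\<forall>\<delta>>0. Uf (thicken \<Omega> \<delta>) \<subseteq> Uf \<Omega>)
         \<and> (convex \<Omega> \<longrightarrow> (\<forall>\<delta>>0. Uf (thicken \<Omega> \<delta>) = Uf \<Omega>))"
proof (intro conjI allI impI)
  fix \<delta> :: real assume "\<delta> > 0"
  have bounded: "bounded \<Omega>" "bounded (thicken \<Omega> \<delta>)"
    using assms(2) compact_thicken compact_imp_bounded by blast+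
  show "Uf (thicken \<Omega> \<delta>) \<subseteq> Uf \<Omega>"
  proof (cases "\<Omega> = {}")
    case True
    then show ?thesis
      by (simp add: thicken_def)
  next
    case False
    then have "thicken \<Omega> \<delta> \<noteq> {}"
      using \<open>\<delta> > 0\<close> by (auto simp: thicken_eq_UN_cball)
    with bounded show ?thesis
      by (intro Uf_antimono_levels admissible_levels_thicken_subset \<open>\<delta> > 0\<close>)
  qed
next
  fix \<delta> :: real assume "convex \<Omega>" "\<delta> > 0"
  have "l_fun (thicken \<Omega> \<delta>) v = l_fun \<Omega> v" if "norm v = 1" for v
    using admissible_levels_thicken_eq[OF that \<open>\<delta> > 0\<close> \<open>convex \<Omega>\<close> compact_imp_closed[OF assms(2)]]
    by (simp add: l_fun_eq_Inf_admissible_levels)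
  then show "Uf (thicken \<Omega> \<delta>) = Uf \<Omega>"
    by (simp add: Uf_def)
qed

end
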